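(* Let $m\ge2$ be an integer and let $A$ be a left brace with $A^{(3)}=A^{m+1}=\{0\}$. Let $a\in A$, define $a_1=a$ and $a_{j+1}=a*a_j$ for $j\ge1$, and let $S$ be the subbrace of $A$ generated by $a$. For $1\le r\le m$ let \[S_r=\Bigl\{\sum_{k=r}^m t_ka_k\;\Big|\; t_k\in\mathbb{Z},\ r\le k\le m\Bigr\}.\] Then $S^r=S_r$ for all $1\le r\le m$, and $S^r=\{0\}$ for $r\ge m+1$. Here $S^r$ is computed inside the left brace $S$.
   Context: A left brace $(A,+,\cdot)$ is a set $A$ with two binary operations such that $(A,+)$ is an abelian group, $(A,\cdot)$ is a group, and $a(b+c)=ab-a+ac$ for all $a,b,c\in A$. In a left brace, $a*b=-a+ab-b$. For subsets $L,M\subseteq A$, $L*M$ is the subgroup of $(A,+)$ generated by $\{l*m\mid l\in L,m\in M\}$. Set $A^{(1)}=A$, $A^{(r+1)}=A^{(r)}*A$, and $A^1=A$, $A^{r+1}=A*A^r$ for $r\ge1$. A subbrace is a subset that is a subgroup of both $(A,+)$ and $(A,\cdot)$ (hence itself a left brace); the subbrace generated by $a$ is the intersection of all subbraces containing $a$. *)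

theory Defs
  imports "HOL-Algebra.Algebra"
begin

text \<open>A left brace is given by two monoid structures on the same carrier:
  P (the additive group, written multiplicatively in HOL-Algebra) and M (the multiplicative group).\<close>

definition left_brace :: "'a monoid \<Rightarrow> 'a monoid \<Rightarrow> bool" where
  "left_brace P M \<longleftrightarrow> carrier P = carrier M \<and> comm_group P \<and> group M \<and>
     (\<forall>a\<in>carrier P. \<forall>b\<in>carrier P. \<forall>c\<in>carrier P.
        a \<otimes>\<^bsub>M\<^esub> (b \<otimes>\<^bsub>P\<^esub> c)
          = ((a \<otimes>\<^bsub>M\<^esub> b) \<otimes>\<^bsub>P\<^esub> inv\<^bsub>P\<^esub> a) \<otimes>\<^bsub>P\<^esub> (a \<otimes>\<^bsub>M\<^esub> c))"

definition brace_star :: "'a monoid \<Rightarrow> 'a monoid \<Rightarrow> 'a \<Rightarrow> 'a \<Rightarrow> 'a" where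
  "brace_star P M a b = (inv\<^bsub>P\<^esub> a \<otimes>\<^bsub>P\<^esub> (a \<otimes>\<^bsub>M\<^esub> b)) \<otimes>\<^bsub>P\<^esub> inv\<^bsub>P\<^esub> b"

definition brace_prod :: "'a monoid \<Rightarrow> 'a monoid \<Rightarrow> 'a set \<Rightarrow> 'a set \<Rightarrow> 'a set" where
  "brace_prod P M L K = generate P {brace_star P M l k | l k. l \<in> L \<and> k \<in> K}"

text \<open>A^r (left series): A^1 = A, A^(r+1) = A * A^r. Index 0 is unused (set to A).\<close>
fun brace_power :: "'a monoid \<Rightarrow> 'a monoid \<Rightarrow> nat \<Rightarrow> 'a set" where
  "brace_power P M 0 = carrier P"
| "brace_power P M (Suc 0) = carrier P"
| "brace_power P M (Suc (Suc n)) = brace_prod P M (carrier P) (brace_power P M (Suc n))"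

text \<open>A^(r) (right series): A^(1) = A, A^(r+1) = A^(r) * A. Index 0 is unused (set to A).\<close>
fun brace_derived :: "'a monoid \<Rightarrow> 'a monoid \<Rightarrow> nat \<Rightarrow> 'a set" where
  "brace_derived P M 0 = carrier P"
| "brace_derived P M (Suc 0) = carrier P"
| "brace_derived P M (Suc (Suc n)) = brace_prod P M (brace_derived P M (Suc n)) (carrier P)"

definition subbrace :: "'a monoid \<Rightarrow> 'a monoid \<Rightarrow> 'a set \<Rightarrow> bool" where
  "subbrace P M B \<longleftrightarrow> subgroup B P \<and> subgroup B M"

definition subbrace_gen :: "'a monoid \<Rightarrow> 'a monoid \<Rightarrow> 'a \<Rightarrow> 'a set" where
  "subbrace_gen P M a = \<Inter>{B. subbrace P M B \<and> a \<in> B}"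

text \<open>a_1 = a, a_(j+1) = a * a_j (meaningful for j \<ge> 1)\<close>
definition brace_seq :: "'a monoid \<Rightarrow> 'a monoid \<Rightarrow> 'a \<Rightarrow> nat \<Rightarrow> 'a" where
  "brace_seq P M a j = ((brace_star P M a) ^^ (j - 1)) a"

end

theory Submission
  imports Defs
begin

text \<open>Let \<open>S\<^sub>j\<close> be the additive subgroup generated by \<open>a\<^sub>j, \<dots>, a\<^sub>m\<close>, so that
  \<open>a * S\<^sub>j \<subseteq> S\<^sub>j\<^sub>+\<^sub>1\<close> because \<open>a * a\<^sub>k = a\<^sub>k\<^sub>+\<^sub>1\<close> and \<open>a\<^sub>m\<^sub>+\<^sub>1 \<in> A\<^sup>m\<^sup>+\<^sup>1 = 0\<close>.
  Since \<open>A\<^sup>(\<^sup>3\<^sup>) = 0\<close>, elements of \<open>A * A\<close> act trivially from the left and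
  \<open>(x + y) * z = x * (y * z) + y * z + x * z\<close>; hence the elements \<open>x\<close> with
  \<open>x * S\<^sub>j \<subseteq> S\<^sub>j\<^sub>+\<^sub>1\<close> for all \<open>j\<close> form an additive subgroup containing \<open>a\<close> and
  \<open>a\<^sub>2, a\<^sub>3, \<dots> \<in> A * A\<close>, i.e. containing \<open>S\<^sub>1\<close>. So \<open>S\<^sub>1\<close> is closed under
  \<open>x \<circ> y = x + x * y + y\<close>, and under inverses because \<open>\<lambda>\<^sub>x = id + (x * \<cdot>)\<close> is
  unipotent with respect to the finite filtration \<open>S\<^sub>1 \<supseteq> S\<^sub>2 \<supseteq> \<dots> \<supseteq> S\<^sub>m\<^sub>+\<^sub>1 = 0\<close>.
  Thus \<open>S = S\<^sub>1\<close>, and \<open>S * S\<^sub>j = S\<^sub>j\<^sub>+\<^sub>1\<close> gives \<open>S\<^sup>r = S\<^sub>r\<close>.\<close>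

lemma (in comm_group) subgroup_finprod_closed:
  assumes H: "subgroup H G" and "finite I" and f: "\<And>i. i \<in> I \<Longrightarrow> f i \<in> H"
  shows "finprod G f I \<in> H"
  using assms(2,3)
proof (induction I rule: finite_induct)
  case empty
  then show ?case by (simp add: subgroup.one_closed[OF H])
next
  case (insert i I)
  then have "f \<in> insert i I \<rightarrow> carrier G"
    using subgroup.mem_carrier[OF H] by blast
  with insert show ?case
    by (simp add: subgroup.m_closed[OF H])
qed

lemma (in comm_group) finprod_int_pow_add:
  fixes s t :: "'i \<Rightarrow> int"
  assumes "f \<in> I \<rightarrow> carrier G"
  shows "finprod G (\<lambda>k. f k [^] s k) I \<otimes> finprod G (\<lambda>k. f k [^] t k) I
           = finprod G (\<lambda>k. f k [^] (s k + t k)) I"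
proof -
  have "finprod G (\<lambda>k. f k [^] s k) I \<otimes> finprod G (\<lambda>k. f k [^] t k) I
          = finprod G (\<lambda>k. f k [^] s k \<otimes> f k [^] t k) I"
    using assms by (intro finprod_multf[symmetric]) (auto simp: Pi_iff)
  also have "\<dots> = finprod G (\<lambda>k. f k [^] (s k + t k)) I"
    using assms by (intro finprod_cong') (auto simp: int_pow_mult Pi_iff)
  finally show ?thesis .
qed

lemma (in comm_group) generate_image_eq_finprod:
  fixes f :: "'i \<Rightarrow> 'a"
  assumes fin: "finite I" and f: "f \<in> I \<rightarrow> carrier G"
  shows "generate G (f ` I) = {finprod G (\<lambda>k. f k [^] t k) I | t :: 'i \<Rightarrow> int. True}"
    (is "_ = ?R")
proof
  have fi: "\<And>i. i \<in> I \<Longrightarrow> f i \<in> carrier G"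
    using f by blast
  have closed: "finprod G (\<lambda>k. f k [^] t k) I \<in> carrier G" for t :: "'i \<Rightarrow> int"
    using f by (auto intro!: finprod_closed)
  have R: "subgroup ?R G"
  proof (rule subgroupI)
    show "?R \<subseteq> carrier G"
      using closed by auto
  next
    fix x assume "x \<in> ?R"
    then obtain t :: "'i \<Rightarrow> int" where x: "x = finprod G (\<lambda>k. f k [^] t k) I" by blast
    have "finprod G (\<lambda>k. f k [^] (- t k)) I \<otimes> x = \<one>"
      using f by (simp add: x finprod_int_pow_add)
    then have "inv x = finprod G (\<lambda>k. f k [^] (- t k)) I"
      by (rule inv_equality) (use x closed in auto)
    then show "inv x \<in> ?R"
      by (auto intro!: exI[of _ "\<lambda>k. - t k"])
  next
    fix x y assume "x \<in> ?R" "y \<in> ?R"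
    then show "x \<otimes> y \<in> ?R"
      using f by (auto simp: finprod_int_pow_add)
  qed blast
  have "f i \<in> ?R" if i: "i \<in> I" for i
  proof -
    have "finprod G (\<lambda>k. f k [^] (if k = i then 1 else 0 :: int)) I
            = finprod G (\<lambda>k. if i = k then f k else \<one>) I"
      using fi by (intro finprod_cong') auto
    also have "\<dots> = f i"
      using i fin fi by (intro finprod_singleton) auto
    finally show ?thesis
      by (auto intro!: exI[of _ "\<lambda>k. if k = i then 1 else 0 :: int"])
  qed
  then show "generate G (f ` I) \<subseteq> ?R"
    by (intro generate_subgroup_incl[OF _ R]) auto
next
  have gen: "subgroup (generate G (f ` I)) G"
    using f by (intro generate_is_subgroup) auto
  show "?R \<subseteq> generate G (f ` I)"
    by (auto intro!: subgroup_finprod_closed[OF gen fin]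
             intro: subgroup_int_pow_closed[OF gen] generate.incl)
qed

locale brace =
  fixes P (structure) and M :: "'a monoid"
  assumes left_brace: "left_brace P M"
begin

sublocale comm_group P
  using left_brace by (simp add: left_brace_def)

sublocale M: group M
  using left_brace by (simp add: left_brace_def)

lemma carrier_M [simp]: "carrier M = carrier P"
  using left_brace by (simp add: left_brace_def)

lemma brace_distrib:
  "\<lbrakk>x \<in> carrier P; y \<in> carrier P; z \<in> carrier P\<rbrakk>
    \<Longrightarrow> x \<otimes>\<^bsub>M\<^esub> (y \<otimes> z) = ((x \<otimes>\<^bsub>M\<^esub> y) \<otimes> inv x) \<otimes> (x \<otimes>\<^bsub>M\<^esub> z)"
  using left_brace by (simp add: left_brace_def)

lemma mult_M_closed [simp]: "x \<in> carrier P \<Longrightarrow> y \<in> carrier P \<Longrightarrow> x \<otimes>\<^bsub>M\<^esub> y \<in> carrier P"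
  using M.m_closed by simp

lemma inv_M_closed [simp]: "x \<in> carrier P \<Longrightarrow> inv\<^bsub>M\<^esub> x \<in> carrier P"
  using M.inv_closed by simp

lemma mult_inv_cancel_left [simp]: "x \<in> carrier P \<Longrightarrow> y \<in> carrier P \<Longrightarrow> x \<otimes> (inv x \<otimes> y) = y"
  by (simp add: m_assoc[symmetric])

lemma one_M: "\<one>\<^bsub>M\<^esub> = \<one>"
proof -
  have e: "\<one>\<^bsub>M\<^esub> \<in> carrier P"
    using M.one_closed by simp
  have "\<one> = inv \<one>\<^bsub>M\<^esub>"
    using brace_distrib[OF e one_closed one_closed] e by simp
  then show ?thesis
    using e by (metis inv_inv inv_one)
qed

abbreviation star :: "'a \<Rightarrow> 'a \<Rightarrow> 'a"
  where "star \<equiv> brace_star P M"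

definition lam :: "'a \<Rightarrow> 'a \<Rightarrow> 'a"
  where "lam x y = inv x \<otimes> (x \<otimes>\<^bsub>M\<^esub> y)"

lemma lam_closed [simp]: "x \<in> carrier P \<Longrightarrow> y \<in> carrier P \<Longrightarrow> lam x y \<in> carrier P"
  by (simp add: lam_def)

lemma star_closed [simp]: "x \<in> carrier P \<Longrightarrow> y \<in> carrier P \<Longrightarrow> star x y \<in> carrier P"
  by (simp add: brace_star_def)

lemma star_eq_lam: "star x y = lam x y \<otimes> inv y"
  by (simp add: brace_star_def lam_def)

lemma lam_eq_star: "x \<in> carrier P \<Longrightarrow> y \<in> carrier P \<Longrightarrow> lam x y = star x y \<otimes> y"
  by (simp add: star_eq_lam m_assoc)

lemma star_one_left [simp]: "z \<in> carrier P \<Longrightarrow> star \<one> z = \<one>"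
  by (simp add: brace_star_def M.l_one[of z, unfolded carrier_M one_M])

lemma mult_M_eq_lam: "x \<in> carrier P \<Longrightarrow> y \<in> carrier P \<Longrightarrow> x \<otimes>\<^bsub>M\<^esub> y = x \<otimes> lam x y"
  by (simp add: lam_def m_assoc[symmetric])

lemma mult_M_eq_star: "x \<in> carrier P \<Longrightarrow> y \<in> carrier P \<Longrightarrow> x \<otimes>\<^bsub>M\<^esub> y = x \<otimes> star x y \<otimes> y"
  by (simp add: mult_M_eq_lam lam_eq_star m_assoc)

lemma lam_mult:
  "\<lbrakk>x \<in> carrier P; y \<in> carrier P; z \<in> carrier P\<rbrakk> \<Longrightarrow> lam x (y \<otimes> z) = lam x y \<otimes> lam x z"
  by (simp add: lam_def brace_distrib m_ac)

lemma lam_hom: "x \<in> carrier P \<Longrightarrow> group_hom P P (lam x)"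
  by (intro group_hom.intro group_hom_axioms.intro homI) (simp_all add: lam_mult)

lemma star_mult:
  "\<lbrakk>x \<in> carrier P; y \<in> carrier P; z \<in> carrier P\<rbrakk> \<Longrightarrow> star x (y \<otimes> z) = star x y \<otimes> star x z"
  by (simp add: star_eq_lam lam_mult inv_mult m_ac)

lemma star_hom: "x \<in> carrier P \<Longrightarrow> group_hom P P (star x)"
  by (intro group_hom.intro group_hom_axioms.intro homI) (simp_all add: star_mult)

lemma star_one_right [simp]: "x \<in> carrier P \<Longrightarrow> star x \<one> = \<one>"
  using group_hom.hom_one[OF star_hom] by simp

lemma lam_mult_M:
  assumes "x \<in> carrier P" "y \<in> carrier P" "z \<in> carrier P"
  shows "lam (x \<otimes>\<^bsub>M\<^esub> y) z = lam x (lam y z)"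
proof -
  have "lam x (lam y z) = inv (lam x y) \<otimes> lam x (y \<otimes>\<^bsub>M\<^esub> z)"
    using assms by (simp add: lam_def[of y z] lam_mult group_hom.hom_inv[OF lam_hom])
  also have "\<dots> = lam (x \<otimes>\<^bsub>M\<^esub> y) z"
    using assms by (simp add: lam_def inv_mult m_assoc m_lcomm[of x "inv (x \<otimes>\<^bsub>M\<^esub> y)"] M.m_assoc)
  finally show ?thesis ..
qed

lemma star_mult_M:
  assumes "x \<in> carrier P" "y \<in> carrier P" "z \<in> carrier P"
  shows "star (x \<otimes>\<^bsub>M\<^esub> y) z = star x (star y z) \<otimes> star y z \<otimes> star x z"
proof -
  have "star (x \<otimes>\<^bsub>M\<^esub> y) z = lam x (star y z \<otimes> z) \<otimes> inv z"
    using assms by (simp only: star_eq_lam[of "x \<otimes>\<^bsub>M\<^esub> y"] lam_mult_M lam_eq_star[of y z])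
  also have "\<dots> = (star x (star y z) \<otimes> star y z) \<otimes> (star x z \<otimes> z) \<otimes> inv z"
    using assms by (simp only: lam_mult star_closed lam_eq_star)
  also have "\<dots> = star x (star y z) \<otimes> star y z \<otimes> star x z"
    using assms by (simp add: m_assoc)
  finally show ?thesis .
qed

lemma subgroup_derived2: "subgroup (brace_derived P M 2) P"
  by (auto simp: numeral_2_eq_2 brace_prod_def brace_star_def intro!: generate_is_subgroup)

lemma star_in_derived2: "x \<in> carrier P \<Longrightarrow> y \<in> carrier P \<Longrightarrow> star x y \<in> brace_derived P M 2"
  by (auto simp: numeral_2_eq_2 brace_prod_def intro: generate.incl)

lemma subbrace_star_closed:
  assumes "subbrace P M B" "x \<in> B" "y \<in> B"
  shows "star x y \<in> B"
  using assms unfolding subbrace_def brace_star_def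
  by (meson subgroup.m_closed subgroup.m_inv_closed)

lemma brace_prod_subbrace:
  assumes B: "subbrace P M B" and "L \<subseteq> B" "K \<subseteq> B"
  shows "brace_prod (P\<lparr>carrier := B\<rparr>) (M\<lparr>carrier := B\<rparr>) L K = brace_prod P M L K"
proof -
  have H: "subgroup B P"
    using B by (simp add: subbrace_def)
  have "brace_star (P\<lparr>carrier := B\<rparr>) (M\<lparr>carrier := B\<rparr>) l k = star l k" if "l \<in> B" "k \<in> B" for l k
    using that by (simp add: brace_star_def m_inv_consistent[OF H])
  then have "{brace_star (P\<lparr>carrier := B\<rparr>) (M\<lparr>carrier := B\<rparr>) l k | l k. l \<in> L \<and> k \<in> K}
               = {star l k | l k. l \<in> L \<and> k \<in> K}"
    using assms(2,3) by (intro Collect_cong) (metis (no_types, lifting) subsetD)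
  moreover have "{star l k | l k. l \<in> L \<and> k \<in> K} \<subseteq> B"
    using assms subbrace_star_closed by blast
  ultimately show ?thesis
    by (simp add: brace_prod_def generate_consistent[OF _ H])
qed

end

locale brace_derived3_trivial = brace +
  assumes derived3_trivial: "brace_derived P M 3 = {\<one>\<^bsub>P\<^esub>}"
begin

lemma star_derived2_left: "v \<in> brace_derived P M 2 \<Longrightarrow> z \<in> carrier P \<Longrightarrow> star v z = \<one>"
proof -
  assume "v \<in> brace_derived P M 2" "z \<in> carrier P"
  then have "star v z \<in> brace_derived P M 3"
    by (auto simp: numeral_3_eq_3 numeral_2_eq_2 brace_prod_def intro: generate.incl)
  then show ?thesis
    by (simp add: derived3_trivial)
qed

lemma mult_M_derived2_left: "v \<in> brace_derived P M 2 \<Longrightarrow> u \<in> carrier P \<Longrightarrow> v \<otimes>\<^bsub>M\<^esub> u = v \<otimes> u"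
  using subgroup.mem_carrier[OF subgroup_derived2] by (simp add: mult_M_eq_star star_derived2_left)

lemma star_mult_derived2:
  assumes u: "u \<in> carrier P" and v: "v \<in> brace_derived P M 2" and z: "z \<in> carrier P"
  shows "star (u \<otimes> v) z = star u z"
proof -
  have v': "v \<in> carrier P"
    using subgroup.mem_carrier[OF subgroup_derived2 v] .
  then have "u \<otimes> v = v \<otimes>\<^bsub>M\<^esub> u"
    using u v by (simp add: mult_M_derived2_left m_comm)
  then show ?thesis
    using u v v' z by (simp add: star_mult_M star_derived2_left)
qed

text \<open>Write \<open>x + y = x \<circ> b\<close>; then \<open>y = b + x * b\<close> differs from \<open>b\<close> by an element of
  \<open>A * A\<close>, which is invisible as a left factor of \<open>*\<close>.\<close>
lemma star_mult_left:
  assumes x: "x \<in> carrier P" and y: "y \<in> carrier P" and z: "z \<in> carrier P"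
  shows "star (x \<otimes> y) z = star x (star y z) \<otimes> star y z \<otimes> star x z"
proof -
  define b where "b = inv\<^bsub>M\<^esub> x \<otimes>\<^bsub>M\<^esub> (x \<otimes> y)"
  have b: "b \<in> carrier P"
    using x y by (simp add: b_def)
  have xb: "x \<otimes>\<^bsub>M\<^esub> b = x \<otimes> y"
    using x y by (simp add: b_def M.m_assoc[symmetric] one_M)
  then have "x \<otimes> y = x \<otimes> (b \<otimes> star x b)"
    using x b by (simp add: mult_M_eq_star m_ac)
  then have "y = b \<otimes> star x b"
    using x y b by simp
  then have "star y z = star b z"
    using b x z by (simp add: star_mult_derived2 star_in_derived2)
  then show ?thesis
    using star_mult_M[OF x b z] xb by simp
qed

lemma star_inv_left:
  assumes x: "x \<in> carrier P" and z: "z \<in> carrier P"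
  shows "star (inv x) z = inv (star x z) \<otimes> inv (star (inv x) (star x z))"
proof -
  have "star (inv x) (star x z) \<otimes> star x z \<otimes> star (inv x) z = \<one>"
    using star_mult_left[of "inv x" x z] x z by simp
  then show ?thesis
    using x z by (metis inv_closed inv_equality inv_mult m_closed star_closed m_comm)
qed

end

locale brace_seq_span = brace_derived3_trivial +
  fixes m :: nat and a :: 'a
  assumes m_pos: "0 < m"
    and power_trivial: "brace_power P M (m + 1) = {\<one>\<^bsub>P\<^esub>}"
    and a_closed [simp]: "a \<in> carrier P"
begin

text \<open>Because of truncated subtraction in \<open>brace_seq\<close>, \<open>seq 0 = seq 1 = a\<close>.\<close>
abbreviation seq :: "nat \<Rightarrow> 'a"
  where "seq \<equiv> brace_seq P M a"

definition span :: "nat \<Rightarrow> 'a set"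
  where "span j = generate P (seq ` {j..m})"

lemma seq_one [simp]: "seq (Suc 0) = a"
  by (simp add: brace_seq_def)

lemma seq_Suc: "1 \<le> k \<Longrightarrow> seq (Suc k) = star a (seq k)"
  by (cases k) (auto simp: brace_seq_def)

lemma seq_closed [simp]: "seq k \<in> carrier P"
proof -
  have "(star a ^^ n) a \<in> carrier P" for n
    by (induction n) auto
  then show ?thesis
    by (simp add: brace_seq_def)
qed

lemma seq_in_power: "seq (Suc k) \<in> brace_power P M (Suc k)"
proof (induction k)
  case (Suc k)
  then have "star a (seq (Suc k)) \<in> {star l y | l y. l \<in> carrier P \<and> y \<in> brace_power P M (Suc k)}"
    using a_closed by blast
  then show ?case
    by (simp add: seq_Suc[of "Suc k"] brace_prod_def generate.incl)
qed simp

lemma seq_trivial: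
  assumes "m < k"
  shows "seq k = \<one>"
proof -
  from assms have "Suc m \<le> k"
    by simp
  then show ?thesis
  proof (induction k rule: dec_induct)
    case base
    show ?case
      using seq_in_power[of m] power_trivial by simp
  next
    case (step n)
    then show ?case
      by (simp add: seq_Suc)
  qed
qed

lemma seq_in_derived2: "2 \<le> k \<Longrightarrow> seq k \<in> brace_derived P M 2"
  by (cases k) (auto simp: seq_Suc star_in_derived2)

lemma subgroup_span: "subgroup (span j) P"
  by (auto simp: span_def intro!: generate_is_subgroup)

lemma span_antimono: "i \<le> j \<Longrightarrow> span j \<subseteq> span i"
  unfolding span_def by (rule mono_generate) auto

lemma seq_in_span: "j \<le> k \<Longrightarrow> k \<le> m \<Longrightarrow> seq k \<in> span j"
  by (auto simp: span_def intro: generate.incl)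

lemma a_in_span1: "a \<in> span 1"
  using seq_in_span[of 1 1] m_pos by simp

lemma span_trivial: "m < j \<Longrightarrow> span j = {\<one>}"
  using generate_empty by (simp add: span_def)

lemma span_eq_finprod:
  "span j = {finprod P (\<lambda>k. seq k [^] t k) {j..m} | t :: nat \<Rightarrow> int. True}"
  unfolding span_def by (intro generate_image_eq_finprod finite_atLeastAtMost Pi_I seq_closed)

lemma span_closed: "y \<in> span j \<Longrightarrow> y \<in> carrier P"
  using subgroup.mem_carrier[OF subgroup_span] .

definition raises :: "'a \<Rightarrow> bool"
  where "raises x \<longleftrightarrow> (\<forall>j\<ge>1. \<forall>y\<in>span j. star x y \<in> span (Suc j))"

lemma raises_a: "raises a"
  unfolding raises_def
proof (intro allI impI ballI)
  fix j y
  assume j: "1 \<le> j" and y: "y \<in> span j"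
  have "star a (seq k) \<in> span (Suc j)" if k: "k \<in> {j..m}" for k
  proof (cases "Suc k \<le> m")
    case True
    then show ?thesis
      using j k by (simp add: seq_Suc[symmetric] seq_in_span)
  next
    case False
    then show ?thesis
      using j k by (simp add: seq_Suc[symmetric] seq_trivial subgroup.one_closed[OF subgroup_span])
  qed
  then have "generate P (star a ` seq ` {j..m}) \<subseteq> span (Suc j)"
    by (intro generate_subgroup_incl[OF _ subgroup_span]) auto
  moreover have "star a y \<in> generate P (star a ` seq ` {j..m})"
    using y group_hom.generate_img[OF star_hom[OF a_closed], of "seq ` {j..m}"]
    by (simp add: span_def image_subset_iff)
  ultimately show "star a y \<in> span (Suc j)"
    by blast
qed

lemma raises_derived2: "v \<in> brace_derived P M 2 \<Longrightarrow> raises v"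
  by (simp add: raises_def star_derived2_left span_closed subgroup.one_closed[OF subgroup_span])

lemma raises_mult:
  assumes x: "x \<in> carrier P" "raises x" and y: "y \<in> carrier P" "raises y"
  shows "raises (x \<otimes> y)"
  unfolding raises_def
proof (intro allI impI ballI)
  fix j c
  assume j: "1 \<le> j" and c: "c \<in> span j"
  have yc: "star y c \<in> span (Suc j)"
    using y j c by (simp add: raises_def)
  then have "star x (star y c) \<in> span (Suc j)"
    using x j span_antimono[of "Suc j" "Suc (Suc j)"] by (auto simp: raises_def)
  moreover have "star x c \<in> span (Suc j)"
    using x j c by (simp add: raises_def)
  ultimately show "star (x \<otimes> y) c \<in> span (Suc j)"
    using yc x y span_closed[OF c]
    by (simp add: star_mult_left subgroup.m_closed[OF subgroup_span])
qed

lemma raises_inv: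
  assumes x: "x \<in> carrier P" "raises x"
  shows "raises (inv x)"
proof -
  have "1 \<le> j \<longrightarrow> (\<forall>c\<in>span j. star (inv x) c \<in> span (Suc j))" for j
  proof (induction j rule: nat_descend_induct[of m])
    case (base j)
    then show ?case
      using x by (simp add: span_trivial)
  next
    case (descend j)
    show ?case
    proof (intro impI ballI)
      fix c
      assume j: "1 \<le> j" and c: "c \<in> span j"
      have xc: "star x c \<in> span (Suc j)"
        using x j c by (simp add: raises_def)
      then have "star (inv x) (star x c) \<in> span (Suc j)"
        using descend.IH[of "Suc j"] span_antimono[of "Suc j" "Suc (Suc j)"] by auto
      with xc show "star (inv x) c \<in> span (Suc j)"
        using x span_closed[OF c]
        by (simp add: star_inv_left subgroup.m_closed[OF subgroup_span] subgroup.m_inv_closed[OF subgroup_span])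
    qed
  qed
  then show ?thesis
    by (simp add: raises_def)
qed

lemma subgroup_raises: "subgroup {x \<in> carrier P. raises x} P"
  using raises_mult raises_inv raises_derived2[OF subgroup.one_closed[OF subgroup_derived2]]
  by (intro subgroupI) auto

lemma raises_span1:
  assumes "x \<in> span 1"
  shows "raises x"
proof -
  have "seq k \<in> {x \<in> carrier P. raises x}" if "k \<in> {1..m}" for k
    using that raises_a raises_derived2[OF seq_in_derived2, of k]
    by (cases "k = 1") auto
  then have "span 1 \<subseteq> {x \<in> carrier P. raises x}"
    unfolding span_def by (intro generate_subgroup_incl[OF _ subgroup_raises]) auto
  with assms show ?thesis
    by blast
qed

lemma lam_surj_span:
  assumes x: "x \<in> carrier P" "raises x" and "1 \<le> j"
  shows "lam x ` span j = span j"
proof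
  show "lam x ` span j \<subseteq> span j"
  proof
    fix c
    assume "c \<in> lam x ` span j"
    then obtain y where y: "y \<in> span j" and c: "c = lam x y"
      by blast
    have "star x y \<in> span j"
      using x assms(3) y span_antimono[of j "Suc j"] by (auto simp: raises_def)
    then show "c \<in> span j"
      using x y span_closed[OF y] by (simp add: c lam_eq_star subgroup.m_closed[OF subgroup_span])
  qed
  have "1 \<le> j \<longrightarrow> span j \<subseteq> lam x ` span j" for j
  proof (induction j rule: nat_descend_induct[of m])
    case (base j)
    then show ?case
      using x by (auto simp: span_trivial lam_eq_star)
  next
    case (descend j)
    show ?case
    proof (intro impI subsetI)
      fix c
      assume j: "1 \<le> j" and c: "c \<in> span j"
      then have "star x c \<in> span (Suc j)"
        using x by (simp add: raises_def)
      then obtain y where y: "y \<in> span (Suc j)" "lam x y = star x c"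
        using descend.IH[of "Suc j"] by auto
      then have "y \<in> span j"
        using span_antimono[of j "Suc j"] by auto
      moreover have "lam x (c \<otimes> inv y) = c"
        using x span_closed[OF c] span_closed[OF y(1)] y(2)
        by (simp add: lam_mult group_hom.hom_inv[OF lam_hom] lam_eq_star[of x c] m_assoc m_lcomm)
      ultimately show "c \<in> lam x ` span j"
        using c by (metis image_eqI subgroup.m_closed[OF subgroup_span] subgroup.m_inv_closed[OF subgroup_span])
    qed
  qed
  then show "span j \<subseteq> lam x ` span j"
    using assms(3) by blast
qed

lemma subbrace_span1: "subbrace P M (span 1)"
  unfolding subbrace_def
proof
  show "subgroup (span 1) P"
    by (rule subgroup_span)
  show "subgroup (span 1) M"
  proof (rule M.subgroupI)
    show "span 1 \<subseteq> carrier M"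
      using span_closed by auto
    show "span 1 \<noteq> {}"
      using a_in_span1 by blast
  next
    fix x y
    assume x: "x \<in> span 1" and y: "y \<in> span 1"
    have "star x y \<in> span 2"
      using raises_span1[OF x] y by (simp add: raises_def numeral_2_eq_2)
    then have "star x y \<in> span 1"
      using span_antimono[of 1 2] by auto
    then show "x \<otimes>\<^bsub>M\<^esub> y \<in> span 1"
      using x y span_closed by (simp add: mult_M_eq_star subgroup.m_closed[OF subgroup_span])
  next
    fix x
    assume x: "x \<in> span 1"
    have "inv x \<in> lam x ` span 1"
      using lam_surj_span[OF span_closed[OF x] raises_span1[OF x]] x
      by (simp add: subgroup.m_inv_closed[OF subgroup_span])
    then obtain y where y: "inv x = lam x y" "y \<in> span 1"
      by (rule imageE)
    have "x \<otimes>\<^bsub>M\<^esub> y = \<one>"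
      using span_closed[OF x] span_closed[OF y(2)] by (simp add: mult_M_eq_lam flip: y(1))
    then have "inv\<^bsub>M\<^esub> x = y"
      using span_closed[OF x] span_closed[OF y(2)] by (metis M.inv_comm M.inv_equality carrier_M one_M)
    with y show "inv\<^bsub>M\<^esub> x \<in> span 1"
      by simp
  qed
qed

lemma subbrace_gen_eq_span1: "subbrace_gen P M a = span 1"
proof
  show "subbrace_gen P M a \<subseteq> span 1"
    unfolding subbrace_gen_def using subbrace_span1 a_in_span1 by blast
  have "span 1 \<subseteq> B" if B: "subbrace P M B" and "a \<in> B" for B
  proof -
    have "seq k \<in> B" for k
    proof (induction k)
      case (Suc k)
      then show ?case
        using \<open>a \<in> B\<close> subbrace_star_closed[OF B] by (cases k) (auto simp: seq_Suc)
    qed (use \<open>a \<in> B\<close> in \<open>simp add: brace_seq_def\<close>)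
    then show ?thesis
      using B unfolding span_def subbrace_def by (intro generate_subgroup_incl) auto
  qed
  then show "span 1 \<subseteq> subbrace_gen P M a"
    by (auto simp: subbrace_gen_def)
qed

lemma brace_prod_span1:
  assumes "1 \<le> j"
  shows "brace_prod P M (span 1) (span j) = span (Suc j)"
proof
  show "brace_prod P M (span 1) (span j) \<subseteq> span (Suc j)"
    unfolding brace_prod_def using raises_span1 assms
    by (intro generate_subgroup_incl[OF _ subgroup_span]) (auto simp: raises_def)
  have "seq k \<in> {star x y | x y. x \<in> span 1 \<and> y \<in> span j}" if "k \<in> {Suc j..m}" for k
  proof -
    have "k = Suc (k - 1)" "j \<le> k - 1" "k - 1 \<le> m"
      using that by auto
    then obtain i where "k = Suc i" "j \<le> i" "i \<le> m"
      by blast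
    then show ?thesis
      using assms a_in_span1 seq_in_span[of j i] by (auto simp: seq_Suc)
  qed
  then show "span (Suc j) \<subseteq> brace_prod P M (span 1) (span j)"
    unfolding brace_prod_def span_def[of "Suc j"]
    by (intro generate_subgroup_incl generate_is_subgroup) (auto intro: generate.incl simp: span_closed)
qed

lemma brace_power_span1:
  "brace_power (P\<lparr>carrier := span 1\<rparr>) (M\<lparr>carrier := span 1\<rparr>) (Suc n) = span (Suc n)"
proof (induction n)
  case (Suc n)
  then show ?case
    using subbrace_span1 span_antimono[of 1 "Suc n"] brace_prod_span1[of "Suc n"]
    by (simp add: brace_prod_subbrace)
qed simp

end

theorem mainTheorem14:
  fixes P M :: "'a monoid" and m :: nat and a :: 'a and S :: "'a set"
  assumes "left_brace P M"
    and "m \<ge> 2"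
    and "brace_derived P M 3 = {\<one>\<^bsub>P\<^esub>}"
    and "brace_power P M (m + 1) = {\<one>\<^bsub>P\<^esub>}"
    and "a \<in> carrier P"
    and "S = subbrace_gen P M a"
  shows "(\<forall>r\<in>{1..m}. brace_power (P\<lparr>carrier := S\<rparr>) (M\<lparr>carrier := S\<rparr>) r
            = {finprod P (\<lambda>k. brace_seq P M a k [^]\<^bsub>P\<^esub> (t k)) {r..m} | t :: nat \<Rightarrow> int. True})
       \<and> (\<forall>r\<ge>m + 1. brace_power (P\<lparr>carrier := S\<rparr>) (M\<lparr>carrier := S\<rparr>) r = {\<one>\<^bsub>P\<^esub>})"
proof -
  interpret brace_seq_span P M m a
    using assms by unfold_locales auto
  have power: "brace_power (P\<lparr>carrier := S\<rparr>) (M\<lparr>carrier := S\<rparr>) r = span r" if "1 \<le> r" for r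
    using brace_power_span1[of "r - 1"] that assms(6) by (simp add: subbrace_gen_eq_span1)
  show ?thesis
    using power span_eq_finprod span_trivial by auto
qed

end
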